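(* Let $A$, $c$, $B$ be as in the context, let $b\in\mathbb NA$, let $u\in\mathbb N^n$ with $Au=b$, and let $\tau\subseteq\{1,\dots,n\}$ be arbitrary. The group relaxation $G^\tau(b)$, i.e. the program $$\min\{(-cB)\cdot z : B^{\bar\tau}z\le\pi_\tau(u),\ z\in\mathbb Z^{n-d}\},$$ has a finite optimal solution if and only if $\tau$ is a face of $\Delta_c$.
   Context: $A\in\mathbb Z^{d\times n}$ has rank $d$, columns $a_1,\dots,a_n$, $cone(A)$ is pointed, $\{x\in\mathbb R^n_{\ge0}:Ax=0\}=\{0\}$, $\mathbb ZA=\mathbb Z^d$, and $\mathbb NA=\{Au:u\in\mathbb N^n\}$. The regular subdivision $\Delta_c$ of $cone(A)$ with respect to $c\in\mathbb Z^n$ is the collection of index sets $\sigma\subseteq\{1,\dots,n\}$ such that there exists $y\in\mathbb R^d$ with $y\cdot a_j=c_j$ for $j\in\sigma$ and $y\cdot a_j<c_j$ for $j\notin\sigma$; $c$ is assumed generic, meaning $\Delta_c$ is a triangulation of $cone(A)$. $B\in\mathbb Z^{n\times(n-d)}$ is a matrix whose columns form a basis of the lattice $\{x\in\mathbb Z^n:Ax=0\}$. For $\tau\subseteq\{1,\dots,n\}$ with complement $\bar\tau$, $B^{\bar\tau}$ is the submatrix of $B$ obtained by deleting the rows indexed by $\tau$, and $\pi_\tau:\mathbb R^n\to\mathbb R^{|\bar\tau|}$ deletes the coordinates indexed by $\tau$. (For $\tau$ a face of $\Delta_c$ this program is equivalent to Gomory's group relaxation $\min\{\tilde c_{\bar\tau}\cdot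 x_{\bar\tau}: A_\tau x_\tau+A_{\bar\tau}x_{\bar\tau}=b,\ x_{\bar\tau}\ge0,\ x\in\mathbb Z^n\}$, where $\tilde c_{\bar\tau}$ is $c_{\bar\sigma}-c_\sigma A_\sigma^{-1}A_{\bar\sigma}$ extended by zeros for a maximal face $\sigma\supseteq\tau$; for arbitrary $\tau$ the group relaxation is defined by the displayed program.) *)

theory Defs
  imports Complex_Main
begin

text \<open>Conventions: indices are 0-based. A d x n integer matrix is a function
  A :: nat => nat => int, where only entries A i j with i < d, j < n matter.
  Column j of A is a_j = (A 0 j, ..., A (d-1) j). Vectors in R^d / Z^n are
  functions nat => real / nat => int, only the first d / n entries matter.\<close>

definition full_row_rank :: "nat \<Rightarrow> nat \<Rightarrow> (nat \<Rightarrow> nat \<Rightarrow> int) \<Rightarrow> bool" where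
  "full_row_rank d n A \<longleftrightarrow>
     (\<forall>y::nat \<Rightarrow> real. (\<forall>j<n. (\<Sum>i<d. y i * of_int (A i j)) = 0) \<longrightarrow> (\<forall>i<d. y i = 0))"

definition cone_of :: "nat \<Rightarrow> (nat \<Rightarrow> nat \<Rightarrow> int) \<Rightarrow> nat set \<Rightarrow> (nat \<Rightarrow> real) set" where
  "cone_of d A S = {v. (\<forall>i\<ge>d. v i = 0) \<and>
      (\<exists>x::nat \<Rightarrow> real. (\<forall>j\<in>S. x j \<ge> 0) \<and> (\<forall>i<d. v i = (\<Sum>j\<in>S. of_int (A i j) * x j)))}"

definition pointed_cone :: "(nat \<Rightarrow> real) set \<Rightarrow> bool" where
  "pointed_cone C \<longleftrightarrow> (\<forall>v. v \<in> C \<and> (\<lambda>i. - v i) \<in> C \<longrightarrow> (\<forall>i. v i = 0))"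

definition pos_kernel_trivial :: "nat \<Rightarrow> nat \<Rightarrow> (nat \<Rightarrow> nat \<Rightarrow> int) \<Rightarrow> bool" where
  "pos_kernel_trivial d n A \<longleftrightarrow>
     (\<forall>x::nat \<Rightarrow> real. (\<forall>j<n. x j \<ge> 0) \<and> (\<forall>i<d. (\<Sum>j<n. of_int (A i j) * x j) = 0)
        \<longrightarrow> (\<forall>j<n. x j = 0))"

definition generates_lattice :: "nat \<Rightarrow> nat \<Rightarrow> (nat \<Rightarrow> nat \<Rightarrow> int) \<Rightarrow> bool" where
  "generates_lattice d n A \<longleftrightarrow>
     (\<forall>b::nat \<Rightarrow> int. \<exists>x::nat \<Rightarrow> int. \<forall>i<d. (\<Sum>j<n. A i j * x j) = b i)"

definition in_NA :: "nat \<Rightarrow> nat \<Rightarrow> (nat \<Rightarrow> nat \<Rightarrow> int) \<Rightarrow> (nat \<Rightarrow> int) \<Rightarrow> bool" where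
  "in_NA d n A b \<longleftrightarrow> (\<exists>u::nat \<Rightarrow> nat. \<forall>i<d. b i = (\<Sum>j<n. A i j * int (u j)))"

definition regular_subdivision ::
    "nat \<Rightarrow> nat \<Rightarrow> (nat \<Rightarrow> nat \<Rightarrow> int) \<Rightarrow> (nat \<Rightarrow> int) \<Rightarrow> nat set set" where
  "regular_subdivision d n A c = {\<sigma>. \<sigma> \<subseteq> {0..<n} \<and>
     (\<exists>y::nat \<Rightarrow> real. \<forall>j<n.
        (j \<in> \<sigma> \<longrightarrow> (\<Sum>i<d. y i * of_int (A i j)) = of_int (c j)) \<and>
        (j \<notin> \<sigma> \<longrightarrow> (\<Sum>i<d. y i * of_int (A i j)) < of_int (c j)))}"

text \<open>c is generic: Delta_c is a triangulation of cone(A), i.e. the cones of its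
  faces cover cone(A) and every face is simplicial (its columns are linearly
  independent).\<close>
definition generic_cost :: "nat \<Rightarrow> nat \<Rightarrow> (nat \<Rightarrow> nat \<Rightarrow> int) \<Rightarrow> (nat \<Rightarrow> int) \<Rightarrow> bool" where
  "generic_cost d n A c \<longleftrightarrow>
     (\<forall>\<sigma>\<in>regular_subdivision d n A c. \<forall>w::nat \<Rightarrow> real.
        (\<forall>i<d. (\<Sum>j\<in>\<sigma>. w j * of_int (A i j)) = 0) \<longrightarrow> (\<forall>j\<in>\<sigma>. w j = 0)) \<and>
     cone_of d A {0..<n} = (\<Union>\<sigma>\<in>regular_subdivision d n A c. cone_of d A \<sigma>)"

definition kernel_lattice_basis ::
    "nat \<Rightarrow> nat \<Rightarrow> (nat \<Rightarrow> nat \<Rightarrow> int) \<Rightarrow> (nat \<Rightarrow> nat \<Rightarrow> int) \<Rightarrow> bool" where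
  "kernel_lattice_basis d n A B \<longleftrightarrow>
     (\<forall>k<n-d. \<forall>i<d. (\<Sum>j<n. A i j * B j k) = 0) \<and>
     (\<forall>x::nat \<Rightarrow> int. (\<forall>i<d. (\<Sum>j<n. A i j * x j) = 0) \<longrightarrow>
        (\<exists>!z::nat \<Rightarrow> int. (\<forall>k\<ge>n-d. z k = 0) \<and> (\<forall>j<n. x j = (\<Sum>k<n-d. B j k * z k))))"

definition gr_feasible ::
    "nat \<Rightarrow> nat \<Rightarrow> (nat \<Rightarrow> nat \<Rightarrow> int) \<Rightarrow> nat set \<Rightarrow> (nat \<Rightarrow> nat) \<Rightarrow> (nat \<Rightarrow> int) \<Rightarrow> bool" where
  "gr_feasible d n B \<tau> u z \<longleftrightarrow> (\<forall>k\<ge>n-d. z k = 0) \<and>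
     (\<forall>j<n. j \<notin> \<tau> \<longrightarrow> (\<Sum>k<n-d. B j k * z k) \<le> int (u j))"

definition gr_objective ::
    "nat \<Rightarrow> nat \<Rightarrow> (nat \<Rightarrow> int) \<Rightarrow> (nat \<Rightarrow> nat \<Rightarrow> int) \<Rightarrow> (nat \<Rightarrow> int) \<Rightarrow> int" where
  "gr_objective d n c B z = (\<Sum>k<n-d. - (\<Sum>j<n. c j * B j k) * z k)"

definition gr_has_finite_optimum ::
    "nat \<Rightarrow> nat \<Rightarrow> (nat \<Rightarrow> int) \<Rightarrow> (nat \<Rightarrow> nat \<Rightarrow> int) \<Rightarrow> nat set \<Rightarrow> (nat \<Rightarrow> nat) \<Rightarrow> bool" where
  "gr_has_finite_optimum d n c B \<tau> u \<longleftrightarrow>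
     (\<exists>z. gr_feasible d n B \<tau> u z \<and>
        (\<forall>z'. gr_feasible d n B \<tau> u z' \<longrightarrow> gr_objective d n c B z \<le> gr_objective d n c B z'))"

end

theory Submission
  imports Defs
begin

text \<open>If \<open>\<tau>\<close> is a face of \<open>\<Delta>\<^sub>c\<close>, a dual vector \<open>y\<close> certifying this lets one replace \<open>c\<close> by the
  reduced cost \<open>c - y A\<close> on the kernel vectors \<open>B z\<close>; it vanishes on \<open>\<tau>\<close> and is nonnegative off
  \<open>\<tau>\<close>, so the objective is bounded below by \<open>-(c - y A) \<cdot> u\<close> on the feasible set, and an
  integer objective bounded below attains its minimum. If \<open>\<tau>\<close> is not a face, the sum of the
  columns \<open>a\<^sub>j\<close>, \<open>j \<in> \<tau>\<close>, lies in the cone of some face \<open>\<sigma>\<close> of the triangulation, with unique,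
  hence rational, coefficients \<open>x\<close>. As faces are closed under taking subsets, \<open>\<tau> \<subseteq> \<sigma>\<close> fails,
  so the rational kernel vector \<open>\<chi>\<^sub>\<tau> - x\<close> is nonpositive off \<open>\<tau>\<close> and has positive cost. An
  integer multiple of it is a feasible ray of the group relaxation along which the objective
  decreases without bound.\<close>

text \<open>The Fredholm alternative over \<open>\<rat>\<close> is proved by Gaussian elimination on the columns: a
  pivot \<open>M e k \<noteq> 0\<close> eliminates column \<open>k\<close>, and solutions and certificates of the reduced
  system lift back.\<close>

lemma pivot_solution_lift:
  fixes M :: "'i \<Rightarrow> 'j \<Rightarrow> real"
  assumes "finite J" "k \<notin> J"
    and "(\<Sum>j\<in>J. (M i j - M i k / M e k * M e j) * l j) = v i - M i k / M e k * v e"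
    and "M e k \<noteq> 0"
  shows "(\<Sum>j\<in>insert k J. M i j * (l(k := (v e - (\<Sum>j\<in>J. M e j * l j)) / M e k)) j) = v i"
proof -
  have "(\<Sum>j\<in>J. M i j * (l(k := x)) j) = (\<Sum>j\<in>J. M i j * l j)" for x
    using \<open>k \<notin> J\<close> by (intro sum.cong) auto
  moreover have "(\<Sum>j\<in>J. (M i j - M i k / M e k * M e j) * l j)
      = (\<Sum>j\<in>J. M i j * l j) - M i k / M e k * (\<Sum>j\<in>J. M e j * l j)"
    by (simp add: algebra_simps sum_subtractf sum_distrib_left)
  ultimately show ?thesis
    using assms by (simp add: field_simps)
qed

lemma pivot_certificate_lift:
  fixes M :: "'i \<Rightarrow> 'j \<Rightarrow> real"
  assumes "finite I" "e \<in> I" "M e k \<noteq> 0"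
    and cert: "\<forall>j\<in>J. (\<Sum>i\<in>I. y i * (M i j - M i k / M e k * M e j)) = 0"
      "(\<Sum>i\<in>I. y i * (v i - M i k / M e k * v e)) \<noteq> 0"
  defines "y' \<equiv> y(e := y e - (\<Sum>i\<in>I. y i * M i k) / M e k)"
  shows "(\<forall>j\<in>insert k J. (\<Sum>i\<in>I. y' i * M i j) = 0) \<and> (\<Sum>i\<in>I. y' i * v i) \<noteq> 0"
proof -
  let ?s = "(\<Sum>i\<in>I. y i * M i k) / M e k"
  have y': "(\<Sum>i\<in>I. y' i * w i) = (\<Sum>i\<in>I. y i * w i) - ?s * w e" for w
    using assms(1,2) by (simp add: y'_def sum.remove algebra_simps)
  have reduced: "(\<Sum>i\<in>I. y i * (w i - M i k / M e k * w e)) = (\<Sum>i\<in>I. y i * w i) - ?s * w e"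
    for w
    by (simp add: right_diff_distrib sum_subtractf sum_divide_distrib sum_distrib_left
        sum_distrib_right algebra_simps)
  have "(\<Sum>i\<in>I. y' i * M i j) = 0" if "j \<in> J" for j
    using cert(1) that reduced[of "\<lambda>i. M i j"] y'[of "\<lambda>i. M i j"] by simp
  moreover have "(\<Sum>i\<in>I. y' i * M i k) = 0"
    using y'[of "\<lambda>i. M i k"] assms(3) by simp
  moreover have "(\<Sum>i\<in>I. y' i * v i) \<noteq> 0"
    using cert(2) reduced[of v] y'[of v] by simp
  ultimately show ?thesis by blast
qed

lemma Rats_solution_or_certificate:
  fixes M :: "'i \<Rightarrow> 'j \<Rightarrow> real" and v :: "'i \<Rightarrow> real"
  assumes "finite I" "finite J" "\<forall>i\<in>I. \<forall>j\<in>J. M i j \<in> \<rat>" "\<forall>i\<in>I. v i \<in> \<rat>"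
  shows "(\<exists>l. (\<forall>j\<in>J. l j \<in> \<rat>) \<and> (\<forall>i\<in>I. (\<Sum>j\<in>J. M i j * l j) = v i)) \<or>
         (\<exists>y. (\<forall>j\<in>J. (\<Sum>i\<in>I. y i * M i j) = 0) \<and> (\<Sum>i\<in>I. y i * v i) \<noteq> 0)"
  using assms(2-4)
proof (induction J arbitrary: M v rule: finite_induct)
  case empty
  show ?case
  proof (cases "\<exists>e\<in>I. v e \<noteq> 0")
    case True
    then obtain e where "e \<in> I" "v e \<noteq> 0" by blast
    then have "(\<Sum>i\<in>I. of_bool (i = e) * v i) \<noteq> 0"
      using \<open>finite I\<close> by simp
    then show ?thesis by (intro disjI2 exI[of _ "\<lambda>i. of_bool (i = e)"]) simp
  qed simp
next
  case (insert k J)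
  show ?case
  proof (cases "\<exists>e\<in>I. M e k \<noteq> 0")
    case False
    have "\<forall>i\<in>I. \<forall>j\<in>J. M i j \<in> \<rat>" "\<forall>i\<in>I. v i \<in> \<rat>"
      using insert.prems by auto
    from insert.IH[OF this] show ?thesis
    proof (elim disjE exE conjE)
      fix l assume "\<forall>j\<in>J. l j \<in> \<rat>" "\<forall>i\<in>I. (\<Sum>j\<in>J. M i j * l j) = v i"
      moreover have "(\<Sum>j\<in>J. M i j * (l(k := 0)) j) = (\<Sum>j\<in>J. M i j * l j)" for i
        using insert.hyps by (intro sum.cong) auto
      ultimately show ?thesis
        using False insert.hyps by (intro disjI1 exI[of _ "l(k := 0)"]) auto
    qed (use False in auto)
  next
    case True
    then obtain e where e: "e \<in> I" "M e k \<noteq> 0" by blast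
    let ?M = "\<lambda>i j. M i j - M i k / M e k * M e j" and ?v = "\<lambda>i. v i - M i k / M e k * v e"
    have "\<forall>i\<in>I. \<forall>j\<in>J. ?M i j \<in> \<rat>" "\<forall>i\<in>I. ?v i \<in> \<rat>"
      using insert.prems e by auto
    from insert.IH[OF this] show ?thesis
    proof (elim disjE exE conjE)
      fix l assume l: "\<forall>j\<in>J. l j \<in> \<rat>" "\<forall>i\<in>I. (\<Sum>j\<in>J. ?M i j * l j) = ?v i"
      let ?lk = "(v e - (\<Sum>j\<in>J. M e j * l j)) / M e k"
      have "?lk \<in> \<rat>"
        using l(1) insert.prems e by (auto intro!: Rats_diff Rats_divide Rats_sum Rats_mult)
      then show ?thesis
        using pivot_solution_lift[where M = M and e = e and v = v, OF insert.hyps _ e(2)] l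
        by (intro disjI1 exI[of _ "l(k := ?lk)"]) auto
    next
      fix y assume "\<forall>j\<in>J. (\<Sum>i\<in>I. y i * ?M i j) = 0" "(\<Sum>i\<in>I. y i * ?v i) \<noteq> 0"
      from pivot_certificate_lift[OF \<open>finite I\<close> e this] show ?thesis by blast
    qed
  qed
qed

lemma Rats_solution_if_real_solution:
  fixes M :: "'i \<Rightarrow> 'j \<Rightarrow> real"
  assumes "finite I" "finite J" "\<forall>i\<in>I. \<forall>j\<in>J. M i j \<in> \<rat>" "\<forall>i\<in>I. v i \<in> \<rat>"
    and x: "\<forall>i\<in>I. (\<Sum>j\<in>J. M i j * x j) = v i"
  obtains l where "\<forall>j\<in>J. l j \<in> \<rat>" "\<forall>i\<in>I. (\<Sum>j\<in>J. M i j * l j) = v i"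
proof -
  have "(\<Sum>i\<in>I. y i * v i) = 0" if "\<forall>j\<in>J. (\<Sum>i\<in>I. y i * M i j) = 0" for y
  proof -
    have "(\<Sum>i\<in>I. y i * v i) = (\<Sum>i\<in>I. y i * (\<Sum>j\<in>J. M i j * x j))"
      using x by simp
    also have "\<dots> = (\<Sum>j\<in>J. (\<Sum>i\<in>I. y i * M i j) * x j)"
      by (simp add: sum_distrib_left sum_distrib_right mult.assoc sum.swap[of _ I])
    finally have "(\<Sum>i\<in>I. y i * v i) = (\<Sum>j\<in>J. (\<Sum>i\<in>I. y i * M i j) * x j)" .
    with that show ?thesis by simp
  qed
  then show ?thesis
    using Rats_solution_or_certificate[OF assms(1-4)] that by blast
qed

lemma solution_if_rows_independent:
  fixes M :: "'i \<Rightarrow> 'j \<Rightarrow> real"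
  assumes "finite I" "finite J" "\<forall>i\<in>I. \<forall>j\<in>J. M i j \<in> \<rat>" "\<forall>i\<in>I. v i \<in> \<rat>"
    and "\<forall>y. (\<forall>j\<in>J. (\<Sum>i\<in>I. y i * M i j) = 0) \<longrightarrow> (\<forall>i\<in>I. y i = 0)"
  obtains l where "\<forall>i\<in>I. (\<Sum>j\<in>J. M i j * l j) = v i"
  using Rats_solution_or_certificate[OF assms(1-4)] assms(5) that by fastforce

lemma common_denominator:
  fixes f :: "'a \<Rightarrow> real"
  assumes "finite S" "\<forall>j\<in>S. f j \<in> \<rat>"
  obtains N :: nat where "N > 0" "\<forall>j\<in>S. real N * f j \<in> \<int>"
  using assms
proof (induction S arbitrary: thesis rule: finite_induct)
  case (insert k S)
  then obtain N :: nat where N: "N > 0" "\<forall>j\<in>S. real N * f j \<in> \<int>" by auto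
  obtain p q where pq: "q > 0" "f k = of_int p / of_int q"
    using insert.prems(2) by (auto elim: Rats_cases')
  have "real (N * nat q) * f j \<in> \<int>" if "j \<in> insert k S" for j
  proof (cases "j = k")
    case True
    then show ?thesis using pq by simp
  next
    case False
    then have "real (N * nat q) * f j = of_int q * (real N * f j)"
      using pq by simp
    moreover have "real N * f j \<in> \<int>" using N(2) False that by simp
    ultimately show ?thesis by (metis Ints_mult Ints_of_int)
  qed
  with N(1) pq(1) show ?case by (intro insert.prems(1)[of "N * nat q"]) auto
qed (use zero_less_one in blast)

lemma small_positive_multiplier:
  fixes a g :: "'a \<Rightarrow> real"
  assumes "finite S" "\<forall>j\<in>S. g j > 0"
  obtains \<epsilon> where "\<epsilon> > 0" "\<forall>j\<in>S. \<epsilon> * a j < g j"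
proof
  let ?E = "insert 1 ((\<lambda>j. g j / (\<bar>a j\<bar> + 1)) ` S)"
  show "Min ?E > 0"
    using assms by (auto intro: divide_pos_pos)
  show "\<forall>j\<in>S. Min ?E * a j < g j"
  proof
    fix j assume "j \<in> S"
    then have "Min ?E * (\<bar>a j\<bar> + 1) \<le> g j"
      using assms(1) by (simp add: pos_le_divide_eq[symmetric] add_pos_nonneg)
    moreover have "Min ?E * a j < Min ?E * (\<bar>a j\<bar> + 1)"
      using \<open>Min ?E > 0\<close> by (intro mult_strict_left_mono) auto
    ultimately show "Min ?E * a j < g j" by linarith
  qed
qed

lemma int_bounded_below_has_min:
  fixes f :: "'a \<Rightarrow> int"
  assumes "P x\<^sub>0" "\<forall>x. P x \<longrightarrow> L \<le> real_of_int (f x)"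
  shows "\<exists>x. P x \<and> (\<forall>y. P y \<longrightarrow> f x \<le> f y)"
proof -
  obtain x where "P x" and x: "\<forall>y. P y \<longrightarrow> nat (f x - \<lfloor>L\<rfloor>) \<le> nat (f y - \<lfloor>L\<rfloor>)"
    using ex_has_least_nat[of P x\<^sub>0 "\<lambda>x. nat (f x - \<lfloor>L\<rfloor>)"] assms(1) by blast
  have "\<lfloor>L\<rfloor> \<le> f y" if "P y" for y
    using assms(2) that by (metis le_floor_iff floor_mono floor_of_int)
  with x \<open>P x\<close> show ?thesis by force
qed

abbreviation column_pairing :: "nat \<Rightarrow> (nat \<Rightarrow> nat \<Rightarrow> int) \<Rightarrow> (nat \<Rightarrow> real) \<Rightarrow> nat \<Rightarrow> real"
  where "column_pairing d A y j \<equiv> \<Sum>i<d. y i * of_int (A i j)"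

definition face_certificate ::
    "nat \<Rightarrow> nat \<Rightarrow> (nat \<Rightarrow> nat \<Rightarrow> int) \<Rightarrow> (nat \<Rightarrow> int) \<Rightarrow> nat set \<Rightarrow> (nat \<Rightarrow> real) \<Rightarrow> bool" where
  "face_certificate d n A c \<sigma> y \<longleftrightarrow> (\<forall>j<n.
     (j \<in> \<sigma> \<longrightarrow> column_pairing d A y j = of_int (c j)) \<and>
     (j \<notin> \<sigma> \<longrightarrow> column_pairing d A y j < of_int (c j)))"

definition columns_independent :: "nat \<Rightarrow> (nat \<Rightarrow> nat \<Rightarrow> int) \<Rightarrow> nat set \<Rightarrow> bool" where
  "columns_independent d A \<sigma> \<longleftrightarrow>
     (\<forall>w :: nat \<Rightarrow> real. (\<forall>i<d. (\<Sum>j\<in>\<sigma>. w j * of_int (A i j)) = 0) \<longrightarrow> (\<forall>j\<in>\<sigma>. w j = 0))"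

lemma regular_subdivision_iff:
  "\<sigma> \<in> regular_subdivision d n A c \<longleftrightarrow> \<sigma> \<subseteq> {0..<n} \<and> (\<exists>y. face_certificate d n A c \<sigma> y)"
  by (simp add: regular_subdivision_def face_certificate_def)

lemma face_certificate_pairing_le:
  "face_certificate d n A c \<sigma> y \<Longrightarrow> j < n \<Longrightarrow> column_pairing d A y j \<le> of_int (c j)"
  unfolding face_certificate_def by (metis order.refl less_imp_le)

lemma generic_cost_columns_independent:
  "generic_cost d n A c \<Longrightarrow> \<sigma> \<in> regular_subdivision d n A c \<Longrightarrow> columns_independent d A \<sigma>"
  unfolding generic_cost_def columns_independent_def by blast

lemma generic_cost_cone_cover:
  "generic_cost d n A c \<Longrightarrow> v \<in> cone_of d A {0..<n} \<Longrightarrow>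
     \<exists>\<sigma>\<in>regular_subdivision d n A c. v \<in> cone_of d A \<sigma>"
  unfolding generic_cost_def by blast

lemma column_pairing_add_scaled:
  "column_pairing d A (\<lambda>i. y i + \<epsilon> * w i) j = column_pairing d A y j + \<epsilon> * column_pairing d A w j"
  by (simp add: algebra_simps sum.distrib sum_distrib_left)

lemma regular_subdivision_downward_closed:
  assumes gen: "generic_cost d n A c"
    and \<sigma>: "\<sigma> \<in> regular_subdivision d n A c" and "\<tau> \<subseteq> \<sigma>"
  shows "\<tau> \<in> regular_subdivision d n A c"
proof -
  obtain y where y: "face_certificate d n A c \<sigma> y" and "\<sigma> \<subseteq> {0..<n}"
    using \<sigma> unfolding regular_subdivision_iff by blast
  then have "finite \<sigma>" using finite_subset by blast
  have indep: "\<forall>w :: nat \<Rightarrow> real. (\<forall>i\<in>{..<d}. (\<Sum>j\<in>\<sigma>. w j * of_int (A i j)) = 0) \<longrightarrow> (\<forall>j\<in>\<sigma>. w j = 0)"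
    using generic_cost_columns_independent[OF gen \<sigma>] unfolding columns_independent_def by blast
  have "\<forall>j\<in>\<sigma>. \<forall>i\<in>{..<d}. real_of_int (A i j) \<in> \<rat>" "\<forall>j\<in>\<sigma>. (if j \<in> \<tau> then 0 else -1 :: real) \<in> \<rat>"
    by auto
  from solution_if_rows_independent[OF \<open>finite \<sigma>\<close> finite_lessThan this indep]
  obtain w :: "nat \<Rightarrow> real"
    where w: "\<forall>j\<in>\<sigma>. (\<Sum>i<d. of_int (A i j) * w i) = (if j \<in> \<tau> then 0 else -1)" .
  have slack: "\<forall>j\<in>{j. j < n \<and> j \<notin> \<sigma>}. of_int (c j) - column_pairing d A y j > 0"
    using y unfolding face_certificate_def by auto
  then obtain \<epsilon> where "\<epsilon> > 0"
    and \<epsilon>: "\<forall>j\<in>{j. j < n \<and> j \<notin> \<sigma>}. \<epsilon> * column_pairing d A w j < of_int (c j) - column_pairing d A y j"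
    using small_positive_multiplier[OF _ slack, of "column_pairing d A w"] by auto
  have "face_certificate d n A c \<tau> (\<lambda>i. y i + \<epsilon> * w i)"
    unfolding face_certificate_def column_pairing_add_scaled
  proof (intro allI impI conjI)
    fix j assume "j < n"
    have "j \<in> \<sigma> \<Longrightarrow> column_pairing d A w j = (if j \<in> \<tau> then 0 else -1)"
      using w by (simp add: mult.commute)
    then show "j \<in> \<tau> \<Longrightarrow> column_pairing d A y j + \<epsilon> * column_pairing d A w j = of_int (c j)"
      and "j \<notin> \<tau> \<Longrightarrow> column_pairing d A y j + \<epsilon> * column_pairing d A w j < of_int (c j)"
      using y \<epsilon> \<open>\<epsilon> > 0\<close> \<open>j < n\<close> \<open>\<tau> \<subseteq> \<sigma>\<close> unfolding face_certificate_def by auto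
  qed
  with \<open>\<tau> \<subseteq> \<sigma>\<close> \<open>\<sigma> \<subseteq> {0..<n}\<close> show ?thesis
    unfolding regular_subdivision_iff by blast
qed

lemma sum_mult_mat_vec_swap:
  fixes f :: "nat \<Rightarrow> int"
  shows "(\<Sum>j<n. f j * (\<Sum>k<m. B j k * z k)) = (\<Sum>k<m. (\<Sum>j<n. f j * B j k) * z k)"
  by (simp add: sum_distrib_left sum_distrib_right mult.assoc sum.swap[of _ "{..<n}"])

lemma kernel_lattice_basis_combination_in_kernel:
  assumes "kernel_lattice_basis d n A B" "i < d"
  shows "(\<Sum>j<n. A i j * (\<Sum>k<n-d. B j k * z k)) = 0"
  using assms unfolding kernel_lattice_basis_def sum_mult_mat_vec_swap by simp

lemma gr_objective_eq:
  "gr_objective d n c B z = - (\<Sum>j<n. c j * (\<Sum>k<n-d. B j k * z k))"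
  unfolding gr_objective_def sum_mult_mat_vec_swap by (simp add: sum_negf)

lemma gr_objective_lower_bound:
  assumes "kernel_lattice_basis d n A B" "face_certificate d n A c \<tau> y"
    and feasible: "gr_feasible d n B \<tau> u z"
  shows "- (\<Sum>j<n. (of_int (c j) - column_pairing d A y j) * real (u j))
           \<le> real_of_int (gr_objective d n c B z)"
proof -
  define x where "x j = (\<Sum>k<n-d. B j k * z k)" for j
  have "(\<Sum>j<n. column_pairing d A y j * of_int (x j)) = (\<Sum>i<d. y i * of_int (\<Sum>j<n. A i j * x j))"
    by (simp add: sum_distrib_left sum_distrib_right mult.assoc sum.swap[of _ "{..<n}"])
  also have "\<dots> = 0"
    using kernel_lattice_basis_combination_in_kernel[OF assms(1)] by (simp add: x_def)
  finally have "(\<Sum>j<n. column_pairing d A y j * of_int (x j)) = 0" .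
  then have "real_of_int (gr_objective d n c B z)
      = - (\<Sum>j<n. (of_int (c j) - column_pairing d A y j) * of_int (x j))"
    by (simp add: gr_objective_eq x_def[symmetric] left_diff_distrib sum_subtractf)
  moreover have "(\<Sum>j<n. (of_int (c j) - column_pairing d A y j) * of_int (x j))
      \<le> (\<Sum>j<n. (of_int (c j) - column_pairing d A y j) * real (u j))"
  proof (intro sum_mono)
    fix j assume "j \<in> {..<n}"
    then have "j < n" by simp
    show "(of_int (c j) - column_pairing d A y j) * of_int (x j)
        \<le> (of_int (c j) - column_pairing d A y j) * real (u j)"
    proof (cases "j \<in> \<tau>")
      case False
      then have "x j \<le> int (u j)" using feasible \<open>j < n\<close> unfolding gr_feasible_def x_def by blast
      then show ?thesis
        using face_certificate_pairing_le[OF assms(2) \<open>j < n\<close>] by (intro mult_left_mono) simp_all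
    qed (use assms(2) \<open>j < n\<close> in \<open>simp add: face_certificate_def\<close>)
  qed
  ultimately show ?thesis by linarith
qed

lemma gr_has_finite_optimum_if_face:
  assumes "kernel_lattice_basis d n A B" "\<tau> \<in> regular_subdivision d n A c"
  shows "gr_has_finite_optimum d n c B \<tau> u"
proof -
  obtain y where y: "face_certificate d n A c \<tau> y"
    using assms(2) unfolding regular_subdivision_iff by blast
  have "gr_feasible d n B \<tau> u (\<lambda>_. 0)"
    unfolding gr_feasible_def by simp
  from int_bounded_below_has_min[where P = "gr_feasible d n B \<tau> u" and f = "gr_objective d n c B", OF this]
  show ?thesis
    unfolding gr_has_finite_optimum_def using gr_objective_lower_bound[OF assms(1) y] by blast
qed

lemma sum_lessThan_restrict:
  fixes f :: "nat \<Rightarrow> 'a::comm_monoid_add"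
  assumes "S \<subseteq> {0..<n}"
  shows "(\<Sum>j<n. if j \<in> S then f j else 0) = sum f S"
proof -
  have "{..<n} \<inter> S = S" using assms by auto
  then show ?thesis by (metis finite_lessThan sum.inter_restrict)
qed

lemma columns_independent_coefficients_Rats:
  fixes x v :: "nat \<Rightarrow> real"
  assumes "finite \<sigma>" "columns_independent d A \<sigma>"
    and x: "\<forall>i<d. (\<Sum>j\<in>\<sigma>. of_int (A i j) * x j) = v i" and "\<forall>i<d. v i \<in> \<rat>"
  shows "\<forall>j\<in>\<sigma>. x j \<in> \<rat>"
proof -
  obtain l where l: "\<forall>j\<in>\<sigma>. l j \<in> \<rat>" "\<forall>i\<in>{..<d}. (\<Sum>j\<in>\<sigma>. of_int (A i j) * l j) = v i"
    using Rats_solution_if_real_solution[of "{..<d}" \<sigma> "\<lambda>i j. of_int (A i j)" v x] assms by auto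
  have "\<forall>i<d. (\<Sum>j\<in>\<sigma>. (l j - x j) * of_int (A i j)) = 0"
    using l(2) x by (simp add: left_diff_distrib sum_subtractf right_diff_distrib mult.commute[of _ "of_int _"])
  then have "\<forall>j\<in>\<sigma>. l j - x j = 0"
    using assms(2) unfolding columns_independent_def by (elim allE[of _ "\<lambda>j. l j - x j"]) simp
  with l(1) show ?thesis by simp
qed

lemma sum_columns_in_rational_face_cone:
  assumes gen: "generic_cost d n A c" and "\<tau> \<subseteq> {0..<n}"
  obtains \<sigma> and x :: "nat \<Rightarrow> real" where "\<sigma> \<in> regular_subdivision d n A c"
    "\<forall>j\<in>\<sigma>. 0 \<le> x j \<and> x j \<in> \<rat>"
    "\<forall>i<d. (\<Sum>j\<in>\<sigma>. of_int (A i j) * x j) = (\<Sum>j\<in>\<tau>. of_int (A i j))"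
proof -
  define v :: "nat \<Rightarrow> real" where "v i = (if i < d then \<Sum>j\<in>\<tau>. of_int (A i j) else 0)" for i
  have "(\<Sum>j\<in>{0..<n}. of_int (A i j) * (if j \<in> \<tau> then 1 else 0)) = (\<Sum>j\<in>\<tau>. real_of_int (A i j))" for i
    using sum_lessThan_restrict[OF \<open>\<tau> \<subseteq> {0..<n}\<close>, of "\<lambda>j. real_of_int (A i j)"]
    by (simp add: atLeast0LessThan if_distrib cong: if_cong)
  then have "v \<in> cone_of d A {0..<n}"
    unfolding cone_of_def
    by (intro CollectI conjI exI[of _ "\<lambda>j. if j \<in> \<tau> then 1 else 0"]) (simp_all add: v_def)
  then obtain \<sigma> where \<sigma>: "\<sigma> \<in> regular_subdivision d n A c" and "v \<in> cone_of d A \<sigma>"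
    using generic_cost_cone_cover[OF gen] by blast
  then obtain x :: "nat \<Rightarrow> real" where x: "\<forall>j\<in>\<sigma>. 0 \<le> x j" "\<forall>i<d. v i = (\<Sum>j\<in>\<sigma>. of_int (A i j) * x j)"
    unfolding cone_of_def by blast
  have "finite \<sigma>"
    using \<sigma> finite_subset unfolding regular_subdivision_iff by blast
  moreover have x_eq: "\<forall>i<d. (\<Sum>j\<in>\<sigma>. of_int (A i j) * x j) = v i"
    using x(2) by simp
  moreover have "\<forall>i<d. v i \<in> \<rat>"
    by (auto simp: v_def intro!: Rats_sum)
  ultimately have "\<forall>j\<in>\<sigma>. x j \<in> \<rat>"
    using columns_independent_coefficients_Rats[OF _ generic_cost_columns_independent[OF gen \<sigma>]]
    by blast
  with x(1) x_eq show ?thesis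
    by (intro that[OF \<sigma>]) (simp_all add: v_def)
qed

lemma face_certificate_cost_eq:
  assumes "face_certificate d n A c \<sigma> y" "\<sigma> \<subseteq> {0..<n}"
  shows "(\<Sum>j\<in>\<sigma>. of_int (c j) * x j) = (\<Sum>i<d. y i * (\<Sum>j\<in>\<sigma>. of_int (A i j) * x j))"
proof -
  have "(\<Sum>j\<in>\<sigma>. of_int (c j) * x j) = (\<Sum>j\<in>\<sigma>. column_pairing d A y j * x j)"
    using assms unfolding face_certificate_def by (intro sum.cong) auto
  also have "\<dots> = (\<Sum>i<d. y i * (\<Sum>j\<in>\<sigma>. of_int (A i j) * x j))"
    by (simp add: sum_distrib_left sum_distrib_right mult.assoc mult.left_commute sum.swap[of _ \<sigma>])
  finally show ?thesis .
qed

lemma face_certificate_slack_sum_pos: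
  assumes y: "face_certificate d n A c \<sigma> y" and "\<tau> \<subseteq> {0..<n}" "t \<in> \<tau>" "t \<notin> \<sigma>"
  shows "(\<Sum>j\<in>\<tau>. of_int (c j) - column_pairing d A y j) > 0"
proof (rule sum_pos2)
  show "finite \<tau>" using \<open>\<tau> \<subseteq> {0..<n}\<close> finite_subset by blast
  show "t \<in> \<tau>" by fact
  show "of_int (c t) - column_pairing d A y t > 0"
    using assms unfolding face_certificate_def by auto
  show "of_int (c j) - column_pairing d A y j \<ge> 0" if "j \<in> \<tau>" for j
    using face_certificate_pairing_le[OF y] that \<open>\<tau> \<subseteq> {0..<n}\<close> by auto
qed

lemma nonface_improving_direction_Rats:
  assumes gen: "generic_cost d n A c" and \<tau>: "\<tau> \<subseteq> {0..<n}" "\<tau> \<notin> regular_subdivision d n A c"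
  obtains X :: "nat \<Rightarrow> real" where "\<forall>j. X j \<in> \<rat>"
    "\<forall>i<d. (\<Sum>j<n. of_int (A i j) * X j) = 0" "\<forall>j<n. j \<notin> \<tau> \<longrightarrow> X j \<le> 0"
    "(\<Sum>j<n. of_int (c j) * X j) > 0"
proof -
  obtain \<sigma> and x :: "nat \<Rightarrow> real" where \<sigma>: "\<sigma> \<in> regular_subdivision d n A c"
    and x: "\<forall>j\<in>\<sigma>. 0 \<le> x j \<and> x j \<in> \<rat>"
    and x_eq: "\<forall>i<d. (\<Sum>j\<in>\<sigma>. of_int (A i j) * x j) = (\<Sum>j\<in>\<tau>. of_int (A i j))"
    using sum_columns_in_rational_face_cone[OF gen \<tau>(1)] by blast
  obtain y where y: "face_certificate d n A c \<sigma> y" and "\<sigma> \<subseteq> {0..<n}"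
    using \<sigma> unfolding regular_subdivision_iff by blast
  obtain t where "t \<in> \<tau>" "t \<notin> \<sigma>"
    using regular_subdivision_downward_closed[OF gen \<sigma>] \<tau>(2) by blast
  define X :: "nat \<Rightarrow> real" where "X j = (if j \<in> \<tau> then 1 else 0) - (if j \<in> \<sigma> then x j else 0)" for j
  have X_sum: "(\<Sum>j<n. f j * X j) = sum f \<tau> - (\<Sum>j\<in>\<sigma>. f j * x j)" for f
  proof -
    have "(\<Sum>j<n. f j * X j)
        = (\<Sum>j<n. if j \<in> \<tau> then f j else 0) - (\<Sum>j<n. if j \<in> \<sigma> then f j * x j else 0)"
      unfolding sum_subtractf[symmetric] by (intro sum.cong) (auto simp: X_def right_diff_distrib)
    then show ?thesis
      using sum_lessThan_restrict[OF \<tau>(1), of f]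
        sum_lessThan_restrict[OF \<open>\<sigma> \<subseteq> {0..<n}\<close>, of "\<lambda>j. f j * x j"] by simp
  qed
  have "(\<Sum>j\<in>\<sigma>. of_int (c j) * x j) = (\<Sum>i<d. y i * (\<Sum>j\<in>\<sigma>. of_int (A i j) * x j))"
    by (rule face_certificate_cost_eq[OF y \<open>\<sigma> \<subseteq> {0..<n}\<close>])
  also have "\<dots> = (\<Sum>j\<in>\<tau>. column_pairing d A y j)"
    using x_eq by (simp add: sum_distrib_left sum.swap[of _ \<tau>])
  finally have "(\<Sum>j<n. of_int (c j) * X j) = (\<Sum>j\<in>\<tau>. of_int (c j) - column_pairing d A y j)"
    using X_sum[of "\<lambda>j. of_int (c j)"] by (simp add: sum_subtractf)
  moreover have "(\<Sum>j\<in>\<tau>. of_int (c j) - column_pairing d A y j) > 0"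
    using face_certificate_slack_sum_pos[OF y \<tau>(1) \<open>t \<in> \<tau>\<close> \<open>t \<notin> \<sigma>\<close>] .
  moreover have "\<forall>i<d. (\<Sum>j<n. of_int (A i j) * X j) = 0"
    using X_sum x_eq by simp
  moreover have "\<forall>j<n. j \<notin> \<tau> \<longrightarrow> X j \<le> 0" "\<forall>j. X j \<in> \<rat>"
    using x by (auto simp: X_def)
  ultimately show ?thesis
    using that by simp
qed

lemma nonface_improving_direction:
  assumes "generic_cost d n A c" "\<tau> \<subseteq> {0..<n}" "\<tau> \<notin> regular_subdivision d n A c"
  obtains X :: "nat \<Rightarrow> int" where "\<forall>i<d. (\<Sum>j<n. A i j * X j) = 0"
    "\<forall>j<n. j \<notin> \<tau> \<longrightarrow> X j \<le> 0" "(\<Sum>j<n. c j * X j) > 0"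
proof -
  obtain X :: "nat \<Rightarrow> real" where X: "\<forall>j. X j \<in> \<rat>"
    "\<forall>i<d. (\<Sum>j<n. of_int (A i j) * X j) = 0" "\<forall>j<n. j \<notin> \<tau> \<longrightarrow> X j \<le> 0"
    "(\<Sum>j<n. of_int (c j) * X j) > 0"
    using nonface_improving_direction_Rats[OF assms] by blast
  obtain N :: nat where "N > 0" and N: "\<forall>j\<in>{..<n}. real N * X j \<in> \<int>"
    using common_denominator[of "{..<n}" X] X(1) by blast
  define Z where "Z j = \<lfloor>real N * X j\<rfloor>" for j
  have Z: "real_of_int (Z j) = real N * X j" if "j < n" for j
    using N that unfolding Z_def by (metis Ints_cases floor_of_int lessThan_iff)
  have Z_sum: "real_of_int (\<Sum>j<n. f j * Z j) = real N * (\<Sum>j<n. of_int (f j) * X j)" for f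
    by (simp add: Z sum_distrib_left mult.left_commute)
  have "real_of_int (\<Sum>j<n. A i j * Z j) = 0" if "i < d" for i
    using Z_sum[of "A i"] X(2) that by simp
  then have "\<forall>i<d. (\<Sum>j<n. A i j * Z j) = 0"
    by (simp only: of_int_eq_0_iff) blast
  moreover have "\<forall>j<n. j \<notin> \<tau> \<longrightarrow> Z j \<le> 0"
    using Z X(3) by (metis mult_nonneg_nonpos of_int_le_0_iff of_nat_0_le_iff)
  moreover have "(\<Sum>j<n. c j * Z j) > 0"
    using Z_sum[of c] X(4) \<open>N > 0\<close> by (metis mult_pos_pos of_int_0_less_iff of_nat_0_less_iff)
  ultimately show ?thesis
    using that by blast
qed

lemma gr_not_has_finite_optimum_if_improving_direction:
  assumes "kernel_lattice_basis d n A B"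
    and "\<forall>i<d. (\<Sum>j<n. A i j * X j) = 0" "\<forall>j<n. j \<notin> \<tau> \<longrightarrow> X j \<le> 0" "(\<Sum>j<n. c j * X j) > 0"
  shows "\<not> gr_has_finite_optimum d n c B \<tau> u"
proof
  assume "gr_has_finite_optimum d n c B \<tau> u"
  then obtain z where z_min: "\<forall>z'. gr_feasible d n B \<tau> u z' \<longrightarrow> gr_objective d n c B z \<le> gr_objective d n c B z'"
    unfolding gr_has_finite_optimum_def by blast
  obtain r where r: "\<forall>k\<ge>n-d. r k = 0" "\<forall>j<n. X j = (\<Sum>k<n-d. B j k * r k)"
    using assms(1,2) unfolding kernel_lattice_basis_def by blast
  have B_mr: "(\<Sum>k<n-d. B j k * (int m * r k)) = int m * X j" if "j < n" for j m
    using r(2) that by (simp add: sum_distrib_left algebra_simps)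
  have "int m * X j \<le> int (u j)" if "j < n" "j \<notin> \<tau>" for j m
    using assms(3) that mult_nonneg_nonpos[of "int m" "X j"] by simp
  then have feasible: "gr_feasible d n B \<tau> u (\<lambda>k. int m * r k)" for m
    unfolding gr_feasible_def using r(1) B_mr by simp
  have objective: "gr_objective d n c B (\<lambda>k. int m * r k) = - (int m * (\<Sum>j<n. c j * X j))" for m
  proof -
    have "(\<Sum>j<n. c j * (\<Sum>k<n-d. B j k * (int m * r k))) = (\<Sum>j<n. c j * (int m * X j))"
      by (intro sum.cong) (simp_all add: B_mr)
    then show ?thesis
      by (simp add: gr_objective_eq sum_distrib_left mult.left_commute)
  qed
  have "gr_objective d n c B z \<le> - int m" for m
  proof -
    have "gr_objective d n c B z \<le> - (int m * (\<Sum>j<n. c j * X j))"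
      using z_min[rule_format, OF feasible[of m]] unfolding objective .
    moreover have "int m \<le> int m * (\<Sum>j<n. c j * X j)"
      using assms(4) by (simp add: mult_le_cancel_left1)
    ultimately show ?thesis by linarith
  qed
  from this[of "nat \<bar>gr_objective d n c B z\<bar> + 1"]
  have "gr_objective d n c B z \<le> - \<bar>gr_objective d n c B z\<bar> - 1"
    by simp
  then show False
    by linarith
qed

lemma regular_subdivision_if_gr_has_finite_optimum:
  assumes "generic_cost d n A c" "kernel_lattice_basis d n A B" "\<tau> \<subseteq> {0..<n}"
    and "gr_has_finite_optimum d n c B \<tau> u"
  shows "\<tau> \<in> regular_subdivision d n A c"
proof (rule ccontr)
  assume "\<tau> \<notin> regular_subdivision d n A c"
  then obtain X where "\<forall>i<d. (\<Sum>j<n. A i j * X j) = 0" "\<forall>j<n. j \<notin> \<tau> \<longrightarrow> X j \<le> 0"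
    "(\<Sum>j<n. c j * X j) > 0"
    by (rule nonface_improving_direction[OF assms(1,3)])
  from gr_not_has_finite_optimum_if_improving_direction[OF assms(2) this] assms(4)
  show False ..
qed

text \<open>Only genericity of \<open>c\<close>, the kernel basis \<open>B\<close> and \<open>\<tau> \<subseteq> {0..<n}\<close> are used.\<close>
theorem theorem2p7:
  fixes d n :: nat
    and A B :: "nat \<Rightarrow> nat \<Rightarrow> int"
    and c b :: "nat \<Rightarrow> int"
    and u :: "nat \<Rightarrow> nat"
    and \<tau> :: "nat set"
  assumes "full_row_rank d n A"
    and "pointed_cone (cone_of d A {0..<n})"
    and "pos_kernel_trivial d n A"
    and "generates_lattice d n A"
    and "generic_cost d n A c"
    and "kernel_lattice_basis d n A B"
    and "in_NA d n A b"
    and "\<forall>i<d. (\<Sum>j<n. A i j * int (u j)) = b i"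
    and "\<tau> \<subseteq> {0..<n}"
  shows "gr_has_finite_optimum d n c B \<tau> u \<longleftrightarrow> \<tau> \<in> regular_subdivision d n A c"
  using gr_has_finite_optimum_if_face[OF assms(6)]
    regular_subdivision_if_gr_has_finite_optimum[OF assms(5,6,9)] by blast

end
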